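(* Every monotone protocol for the game $G_n$ has cost at least $\lfloor\sqrt{n}\rfloor$.
   Context: The game $G_n$ ($n$ a positive integer): Alice receives, as a stream, a permutation $\sigma=(\sigma_1,\dots,\sigma_n)$ of $[n]=\{1,\dots,n\}$ followed by a bit $b\in\{0,1\}$. She has an array $\mathbf{v}=(v_1,\dots,v_n)$ whose cells are initially empty. For each $i<n$, upon receiving $\sigma_i$ she writes a bit in cell $\sigma_i$, which cannot later be changed. Upon receiving $\sigma_n$ and $b$ she writes $b$ in cell $\sigma_n$. Bob receives the completed array $\mathbf{v}\in\{0,1\}^n$ and outputs a set $J\subseteq[n]$ as a function of $\mathbf{v}$. A protocol is valid if $\sigma_n\in J$ for all $\sigma,b$; its cost is the maximum of $|J|$ over all $\sigma,b$. Protocols are required to be valid. A partial assignment is an element of $\{0,1,*\}^n$ ($*$ = unfilled). An order oblivious protocol is one given by maps $A_1,\dots,A_n$ from partial assignments to $\{0,1\}$: when $\sigma_i$ ($i<n$) arrives and the current partial assignment is $\mathbf{v}$, Alice writes $A_{\sigma_i}(\mathbf{v})$ in cell $\sigma_i$. For partial assignments $\alpha,\beta$, $\beta$ extends $\alpha$ ($\beta\ge\alpha$) if $\beta$ is obtained from $\alpha$ by fixing additional cells. The protocol is monotone if it is order oblivious and each $A_i$ is monotone: $\beta\ge\alpha$ implies $A_i(\beta)\ge A_i(\alpha)$. *)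

theory Defs
  imports Main Complex_Main
begin

text \<open>Cells are indexed by [n] = {1..n}. A partial assignment is a map
  nat => bool option (None = unfilled cell), with all cells outside [n] None.
  Bits are booleans (0 = False, 1 = True).\<close>

type_synonym passign = "nat \<Rightarrow> bool option"

definition partial_assignment :: "nat \<Rightarrow> passign \<Rightarrow> bool" where
  "partial_assignment n \<alpha> \<longleftrightarrow> (\<forall>i. i \<notin> {1..n} \<longrightarrow> \<alpha> i = None)"

definition extends :: "passign \<Rightarrow> passign \<Rightarrow> bool" where
  "extends \<beta> \<alpha> \<longleftrightarrow> (\<forall>i. \<alpha> i \<noteq> None \<longrightarrow> \<beta> i = \<alpha> i)"

definition is_perm :: "nat \<Rightarrow> nat list \<Rightarrow> bool" where
  "is_perm n \<sigma> \<longleftrightarrow> distinct \<sigma> \<and> set \<sigma> = {1..n}"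

text \<open>Order oblivious protocol for Alice: maps A i (for cell i) from partial
  assignments to bits. Alice processes the arriving cells in order.\<close>
fun fill :: "(nat \<Rightarrow> passign \<Rightarrow> bool) \<Rightarrow> nat list \<Rightarrow> passign \<Rightarrow> passign" where
  "fill A [] v = v"
| "fill A (x # xs) v = fill A xs (v(x := Some (A x v)))"

definition final_array :: "(nat \<Rightarrow> passign \<Rightarrow> bool) \<Rightarrow> nat list \<Rightarrow> bool \<Rightarrow> passign" where
  "final_array A \<sigma> b = (fill A (butlast \<sigma>) (\<lambda>_. None))(last \<sigma> := Some b)"

definition monotone_protocol :: "nat \<Rightarrow> (nat \<Rightarrow> passign \<Rightarrow> bool) \<Rightarrow> bool" where
  "monotone_protocol n A \<longleftrightarrow>
     (\<forall>i\<in>{1..n}. \<forall>\<alpha> \<beta>. partial_assignment n \<alpha> \<and> partial_assignment n \<beta> \<and> extends \<beta> \<alpha>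
        \<longrightarrow> A i \<alpha> \<le> A i \<beta>)"

definition valid_protocol :: "nat \<Rightarrow> (nat \<Rightarrow> passign \<Rightarrow> bool) \<Rightarrow> (passign \<Rightarrow> nat set) \<Rightarrow> bool" where
  "valid_protocol n A Bob \<longleftrightarrow>
     (\<forall>\<sigma> b. is_perm n \<sigma> \<longrightarrow>
        Bob (final_array A \<sigma> b) \<subseteq> {1..n} \<and> last \<sigma> \<in> Bob (final_array A \<sigma> b))"

definition protocol_cost :: "nat \<Rightarrow> (nat \<Rightarrow> passign \<Rightarrow> bool) \<Rightarrow> (passign \<Rightarrow> nat set) \<Rightarrow> nat" where
  "protocol_cost n A Bob = Max {card (Bob (final_array A \<sigma> b)) | \<sigma> b. is_perm n \<sigma>}"

end

theory Submission
  imports Defs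
begin

text \<open>Take a largest set S of cells that Alice can be made to fill entirely with zeros, and let
  U be its complement. By maximality every cell of U then reads a one, so the array with zeros on S
  and ones on U arises with any cell of U written last, and also with any s \<in> S written last
  unless some u \<in> U would read a zero once s is left open; call such s a blocker of u. Moving u
  into S gives another array, on which u and every blocker of u can be written last. If c is the
  cost, the first array gives |U| + |unblocked| \<le> c and the second |blockers of u| \<le> c - 1,
  hence n = |S| + |U| \<le> c + |U| (c - 1) \<le> c * c.\<close>

definition zeros_ones :: "nat set \<Rightarrow> nat set \<Rightarrow> passign" where
  "zeros_ones Z Y = (\<lambda>i. if i \<in> Z then Some False else if i \<in> Y then Some True else None)"

lemma fill_append: "fill A (xs @ ys) v = fill A ys (fill A xs v)"
  by (induction xs arbitrary: v) auto

lemma finite_perms: "finite {\<sigma>. is_perm n \<sigma>}"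
proof (rule finite_subset)
  show "{\<sigma>. is_perm n \<sigma>} \<subseteq> {xs. set xs \<subseteq> {1..n} \<and> length xs \<le> n}"
    unfolding is_perm_def using distinct_card by fastforce
qed (rule finite_lists_length_le, simp)

lemma finite_protocol_costs:
  "finite {card (Bob (final_array A \<sigma> b)) | \<sigma> b. is_perm n \<sigma>}"
proof (rule finite_subset)
  show "{card (Bob (final_array A \<sigma> b)) | \<sigma> b. is_perm n \<sigma>}
      \<subseteq> (\<lambda>p. card (Bob (final_array A (fst p) (snd p)))) ` ({\<sigma>. is_perm n \<sigma>} \<times> UNIV)"
    by force
  show "finite ((\<lambda>p. card (Bob (final_array A (fst p) (snd p)))) ` ({\<sigma>. is_perm n \<sigma>} \<times> (UNIV :: bool set)))"
    using finite_perms by simp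
qed

lemma card_le_protocol_cost:
  assumes "valid_protocol n A Bob" "is_perm n \<sigma>" "L \<subseteq> Bob (final_array A \<sigma> b)"
  shows "card L \<le> protocol_cost n A Bob"
proof -
  have "Bob (final_array A \<sigma> b) \<subseteq> {1..n}"
    using assms(1,2) unfolding valid_protocol_def by blast
  then have "card L \<le> card (Bob (final_array A \<sigma> b))"
    using assms(3) by (intro card_mono) (auto intro: finite_subset)
  also have "\<dots> \<le> protocol_cost n A Bob"
    unfolding protocol_cost_def using finite_protocol_costs assms(2) by (intro Max_ge) blast+
  finally show ?thesis .
qed

lemma monotone_protocol_zeros_ones:
  assumes "monotone_protocol n A" "i \<in> {1..n}" "Z \<union> Y \<subseteq> {1..n}"
    and "Z' \<subseteq> Z" "Y' \<subseteq> Y" "Y' \<inter> Z = {}" "A i (zeros_ones Z' Y')"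
  shows "A i (zeros_ones Z Y)"
proof -
  have "partial_assignment n (zeros_ones Z Y)" "partial_assignment n (zeros_ones Z' Y')"
    using assms(3-5) unfolding partial_assignment_def zeros_ones_def by auto
  moreover have "extends (zeros_ones Z Y) (zeros_ones Z' Y')"
    using assms(4-6) unfolding extends_def zeros_ones_def by auto
  ultimately have "A i (zeros_ones Z' Y') \<le> A i (zeros_ones Z Y)"
    using assms(1,2) unfolding monotone_protocol_def by blast
  then show ?thesis using assms(7) by (simp add: le_bool_def)
qed

inductive zero_fillable :: "nat \<Rightarrow> (nat \<Rightarrow> passign \<Rightarrow> bool) \<Rightarrow> nat set \<Rightarrow> bool" for n A where
  empty: "zero_fillable n A {}"
| insert: "zero_fillable n A S \<Longrightarrow> x \<in> {1..n} \<Longrightarrow> x \<notin> S \<Longrightarrow> \<not> A x (zeros_ones S {})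
    \<Longrightarrow> zero_fillable n A (insert x S)"

lemma zero_fillable_subset: "zero_fillable n A S \<Longrightarrow> S \<subseteq> {1..n}"
  by (induction rule: zero_fillable.induct) auto

lemma zero_fillable_finite: "zero_fillable n A S \<Longrightarrow> finite S"
  by (rule finite_subset[OF zero_fillable_subset]) simp_all

lemma zero_fillable_fill:
  "zero_fillable n A S \<Longrightarrow> \<exists>xs. distinct xs \<and> set xs = S \<and> fill A xs (\<lambda>_. None) = zeros_ones S {}"
proof (induction rule: zero_fillable.induct)
  case empty
  show ?case by (rule exI[of _ "[]"]) (auto simp: zeros_ones_def)
next
  case (insert S x)
  then obtain xs where xs: "distinct xs" "set xs = S" "fill A xs (\<lambda>_. None) = zeros_ones S {}"
    by blast
  have "fill A (xs @ [x]) (\<lambda>_. None) = (zeros_ones S {})(x := Some False)"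
    using xs insert by (simp add: fill_append)
  also have "\<dots> = zeros_ones (insert x S) {}" by (auto simp: zeros_ones_def)
  finally show ?case using xs insert by (intro exI[of _ "xs @ [x]"]) auto
qed

lemma zero_fillable_downward_closed:
  assumes "monotone_protocol n A"
  shows "zero_fillable n A S \<Longrightarrow> T \<subseteq> S \<Longrightarrow> zero_fillable n A T"
proof (induction arbitrary: T rule: zero_fillable.induct)
  case empty
  then show ?case by (simp add: zero_fillable.empty)
next
  case (insert S x)
  have fill_rest: "zero_fillable n A (T - {x})" using insert.IH insert.prems by blast
  show ?case
  proof (cases "x \<in> T")
    case False
    then show ?thesis using fill_rest by simp
  next
    case True
    have "\<not> A x (zeros_ones (T - {x}) {})"
      using monotone_protocol_zeros_ones[OF assms, of x S "{}" "T - {x}" "{}"]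
        insert zero_fillable_subset[OF insert(1)] by auto
    then have "zero_fillable n A (insert x (T - {x}))"
      using fill_rest insert by (intro zero_fillable.insert) auto
    then show ?thesis using True by (simp add: insert_absorb)
  qed
qed

lemma fill_forced_ones:
  assumes "monotone_protocol n A" "Z \<union> Y \<union> set ys \<subseteq> {1..n}" "(Y \<union> set ys) \<inter> Z = {}"
    and "\<forall>y\<in>set ys. A y (zeros_ones Z {})"
  shows "fill A ys (zeros_ones Z Y) = zeros_ones Z (Y \<union> set ys)"
  using assms(2-4)
proof (induction ys arbitrary: Y)
  case Nil
  then show ?case by simp
next
  case (Cons y ys)
  have "A y (zeros_ones Z Y)"
    using monotone_protocol_zeros_ones[OF assms(1), of y Z Y Z "{}"] Cons.prems by auto
  then have "(zeros_ones Z Y)(y := Some (A y (zeros_ones Z Y))) = zeros_ones Z (insert y Y)"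
    using Cons.prems by (auto simp: zeros_ones_def)
  then have "fill A (y # ys) (zeros_ones Z Y) = fill A ys (zeros_ones Z (insert y Y))"
    by simp
  also have "\<dots> = zeros_ones Z (insert y Y \<union> set ys)"
    using Cons by (intro Cons.IH) auto
  finally show ?case by simp
qed

text \<open>A cell j can be written last in a play whose completed array has zeros exactly on T:
  first T - {j} is filled with zeros, then all other cells but j with ones.\<close>

definition last_candidate :: "nat \<Rightarrow> (nat \<Rightarrow> passign \<Rightarrow> bool) \<Rightarrow> nat set \<Rightarrow> nat \<Rightarrow> bool" where
  "last_candidate n A T j \<longleftrightarrow> j \<in> {1..n} \<and> zero_fillable n A (T - {j}) \<and>
     (\<forall>y\<in>{1..n} - T - {j}. A y (zeros_ones (T - {j}) {}))"

lemma last_candidate_play: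
  assumes "monotone_protocol n A" "T \<subseteq> {1..n}" "last_candidate n A T j"
  obtains \<sigma> b where "is_perm n \<sigma>" "last \<sigma> = j" "final_array A \<sigma> b = zeros_ones T ({1..n} - T)"
proof -
  obtain xs where xs: "distinct xs" "set xs = T - {j}" "fill A xs (\<lambda>_. None) = zeros_ones (T - {j}) {}"
    using assms(3) zero_fillable_fill unfolding last_candidate_def by blast
  define ys where "ys = sorted_list_of_set ({1..n} - T - {j})"
  have ys: "distinct ys" "set ys = {1..n} - T - {j}" unfolding ys_def by auto
  define \<sigma> where "\<sigma> = xs @ ys @ [j]"
  have perm: "is_perm n \<sigma>"
    unfolding is_perm_def \<sigma>_def using xs ys assms(2,3) by (auto simp: last_candidate_def)
  have "fill A ys (zeros_ones (T - {j}) {}) = zeros_ones (T - {j}) ({} \<union> set ys)"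
    using fill_forced_ones[OF assms(1), of "T - {j}" "{}" ys] assms(2,3) ys
    by (auto simp: last_candidate_def)
  then have "final_array A \<sigma> (j \<notin> T) = (zeros_ones (T - {j}) (set ys))(j := Some (j \<notin> T))"
    unfolding final_array_def \<sigma>_def using xs by (simp add: fill_append butlast_append)
  also have "\<dots> = zeros_ones T ({1..n} - T)"
    using ys assms(3) by (auto simp: zeros_ones_def last_candidate_def fun_eq_iff)
  finally show ?thesis using that perm by (simp add: \<sigma>_def)
qed

locale monotone_valid_protocol =
  fixes n :: nat and A :: "nat \<Rightarrow> passign \<Rightarrow> bool" and Bob :: "passign \<Rightarrow> nat set"
  assumes monotone: "monotone_protocol n A" and valid: "valid_protocol n A Bob"
begin

text \<open>All last candidates for T produce the same array, so Bob must include all of them.\<close>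

lemma card_last_candidates_le_cost:
  assumes "T \<subseteq> {1..n}" "\<forall>j\<in>L. last_candidate n A T j"
  shows "card L \<le> protocol_cost n A Bob"
proof (cases "L = {}")
  case False
  then obtain j0 where "j0 \<in> L" by blast
  then obtain \<sigma>0 b0 where play0: "is_perm n \<sigma>0" "final_array A \<sigma>0 b0 = zeros_ones T ({1..n} - T)"
    using last_candidate_play[OF monotone assms(1)] assms(2) by metis
  have "L \<subseteq> Bob (final_array A \<sigma>0 b0)"
  proof
    fix j assume "j \<in> L"
    then obtain \<sigma> b where "is_perm n \<sigma>" "last \<sigma> = j" "final_array A \<sigma> b = zeros_ones T ({1..n} - T)"
      using last_candidate_play[OF monotone assms(1)] assms(2) by metis
    then show "j \<in> Bob (final_array A \<sigma>0 b0)"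
      using valid play0(2) unfolding valid_protocol_def by metis
  qed
  then show ?thesis using card_le_protocol_cost[OF valid play0(1)] by blast
qed simp

end

locale maximal_zero_fillable = monotone_valid_protocol +
  fixes S :: "nat set"
  assumes zero_fillable_S: "zero_fillable n A S"
    and maximal: "\<And>T. zero_fillable n A T \<Longrightarrow> card T \<le> card S"
begin

definition outside :: "nat set" where
  "outside = {1..n} - S"

definition blockers :: "nat \<Rightarrow> nat set" where
  "blockers u = {s \<in> S. \<not> A u (zeros_ones (S - {s}) {})}"

abbreviation cost :: nat where
  "cost \<equiv> protocol_cost n A Bob"

lemma S_subset: "S \<subseteq> {1..n}"
  using zero_fillable_S by (rule zero_fillable_subset)

lemma finite_S: "finite S"
  using zero_fillable_S by (rule zero_fillable_finite)

lemma forced_one_of_maximal: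
  assumes "zero_fillable n A T" "card T = card S" "w \<in> {1..n}" "w \<notin> T"
  shows "A w (zeros_ones T {})"
proof (rule ccontr)
  assume "\<not> A w (zeros_ones T {})"
  then have "card (insert w T) \<le> card S"
    using assms by (intro maximal zero_fillable.insert) auto
  then show False using assms zero_fillable_finite by simp
qed

lemma card_unblocked_Un_outside_le_cost:
  "card ((S - (\<Union>u\<in>outside. blockers u)) \<union> outside) \<le> cost"
proof (rule card_last_candidates_le_cost[OF S_subset], intro ballI)
  fix j assume j: "j \<in> (S - (\<Union>u\<in>outside. blockers u)) \<union> outside"
  have "zero_fillable n A (S - {j})"
    using zero_fillable_downward_closed[OF monotone zero_fillable_S] by blast
  moreover have "A y (zeros_ones (S - {j}) {})" if "y \<in> {1..n} - S - {j}" for y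
    using j that forced_one_of_maximal[OF zero_fillable_S refl]
    by (auto simp: outside_def blockers_def)
  ultimately show "last_candidate n A S j"
    using j S_subset by (auto simp: last_candidate_def outside_def)
qed

lemma last_candidate_insert_outside:
  assumes u: "u \<in> outside" and j: "j \<in> insert u (blockers u)"
  shows "last_candidate n A (insert u S) j"
proof -
  have u_cell: "u \<in> {1..n}" "u \<notin> S" using u by (auto simp: outside_def)
  show ?thesis
  proof (cases "j = u")
    case True
    then show ?thesis
      using zero_fillable_S u_cell forced_one_of_maximal[OF zero_fillable_S refl]
      by (auto simp: last_candidate_def)
  next
    case False
    with j have blocker: "j \<in> blockers u" by simp
    then have "j \<in> S" by (simp add: blockers_def)
    with False have swap: "insert u S - {j} = insert u (S - {j})" by auto
    have fillable: "zero_fillable n A (insert u (S - {j}))"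
      using blocker u_cell zero_fillable_downward_closed[OF monotone zero_fillable_S]
      by (intro zero_fillable.insert) (auto simp: blockers_def)
    have "card (insert u (S - {j})) = card S"
      using finite_S \<open>j \<in> S\<close> u_cell card_Suc_Diff1 by fastforce
    then show ?thesis
      using \<open>j \<in> S\<close> S_subset fillable forced_one_of_maximal[OF fillable]
      unfolding last_candidate_def swap by auto
  qed
qed

lemma card_blockers_lt_cost:
  assumes u: "u \<in> outside"
  shows "card (blockers u) < cost"
proof -
  have "card (insert u (blockers u)) \<le> cost"
    using u S_subset last_candidate_insert_outside
    by (intro card_last_candidates_le_cost[of "insert u S"]) (auto simp: outside_def)
  moreover have "u \<notin> blockers u" "finite (blockers u)"
    using u finite_S by (auto simp: outside_def blockers_def)
  ultimately show ?thesis by simp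
qed

lemma n_le_cost_squared: "n \<le> cost * cost"
proof -
  let ?unblocked = "S - (\<Union>u\<in>outside. blockers u)"
  have fin: "finite outside" "finite ?unblocked" "finite (\<Union>u\<in>outside. blockers u)"
    using finite_S by (auto simp: outside_def blockers_def)
  have "n = card S + card outside"
    using S_subset finite_S card_Diff_subset[OF finite_S S_subset] card_mono[OF _ S_subset]
    by (simp add: outside_def)
  also have "card S \<le> card ?unblocked + card (\<Union>u\<in>outside. blockers u)"
    by (rule order_trans[OF card_mono card_Un_le]) (use fin in auto)
  also have "card (\<Union>u\<in>outside. blockers u) \<le> (\<Sum>u\<in>outside. card (blockers u))"
    using fin(1) by (rule card_UN_le)
  also have "\<dots> \<le> of_nat (card outside) * (cost - 1)"
    using card_blockers_lt_cost by (intro sum_bounded_above) fastforce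
  finally have n_le: "n \<le> card ?unblocked + card outside + card outside * (cost - 1)"
    by simp
  have "?unblocked \<inter> outside = {}" by (auto simp: outside_def)
  then have "card ?unblocked + card outside \<le> cost"
    using card_Un_disjoint[OF fin(2,1)] card_unblocked_Un_outside_le_cost by simp
  then have "n \<le> cost + cost * (cost - 1)"
    using n_le by (meson add_le_mono le_add2 le_trans mult_le_mono1)
  then show ?thesis by (cases cost) auto
qed

end

lemma floor_sqrt_le_of_le_square:
  assumes "n \<le> c * c"
  shows "\<lfloor>sqrt (real n)\<rfloor> \<le> int c"
proof -
  have "sqrt (real n) \<le> sqrt ((real c)\<^sup>2)"
    using assms by (intro real_sqrt_le_mono) (simp add: power2_eq_square flip: of_nat_mult)
  then show ?thesis by (simp add: floor_le_iff)
qed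

theorem theorem3:
  fixes n :: nat
    and A :: "nat \<Rightarrow> passign \<Rightarrow> bool"
    and Bob :: "passign \<Rightarrow> nat set"
  assumes "n \<ge> 1"
    and "monotone_protocol n A"
    and "valid_protocol n A Bob"
  shows "\<lfloor>sqrt (real n)\<rfloor> \<le> int (protocol_cost n A Bob)"
proof -
  have bounded: "card T < Suc n" if "zero_fillable n A T" for T
    using card_mono[OF _ zero_fillable_subset[OF that]] by simp
  obtain S where "zero_fillable n A S" "\<And>T. zero_fillable n A T \<Longrightarrow> card T \<le> card S"
    using ex_has_greatest_nat[of "zero_fillable n A" "{}" card "Suc n"] zero_fillable.empty bounded
    by blast
  then interpret maximal_zero_fillable n A Bob S
    using assms(2,3) by unfold_locales
  show ?thesis using floor_sqrt_le_of_le_square n_le_cost_squared by blast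
qed

end
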